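(* Let $\mathbf{A}\in\mathbb{Z}^{r\times n}$ be a fixed matrix whose entries are bounded in absolute value by $\mathrm{poly}(n)$, and let $s\ge1$. Then there is a matrix $\mathbf{A}'\in\mathbb{Z}^{r\times n}$, obtained from $\mathbf{A}$ by zeroing out at most $O(rs\log n)$ columns, such that $|\mathrm{Frac}(\mathbf{y}^\top\mathbf{A}')_j|^2\le\frac1s\|\mathrm{Frac}(\mathbf{y}^\top\mathbf{A}')\|_2^2$ for all $\mathbf{y}\in\mathbb{R}^r$ and all $j\in[n]$.
   Context: For $x\in\mathbb{R}$, $\mathrm{Frac}(x)=x-\mathrm{int}(x)\in(-\tfrac12,\tfrac12]$, where $\mathrm{int}(x)$ is the integer closest to $x$; for a vector, $\mathrm{Frac}$ is applied coordinatewise. *)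

theory Defs
  imports Complex_Main
begin

text \<open>int(x): nearest integer, ties broken so that Frac(x) lies in (-1/2, 1/2].\<close>
definition nint :: "real \<Rightarrow> int" where
  "nint x = \<lceil>x - 1/2\<rceil>"

definition Frac :: "real \<Rightarrow> real" where
  "Frac x = x - real_of_int (nint x)"

definition vecmat :: "nat \<Rightarrow> (nat \<Rightarrow> real) \<Rightarrow> (nat \<Rightarrow> nat \<Rightarrow> int) \<Rightarrow> nat \<Rightarrow> real" where
  "vecmat r y A j = (\<Sum>i<r. y i * real_of_int (A i j))"

definition zero_cols :: "(nat \<Rightarrow> nat \<Rightarrow> int) \<Rightarrow> nat set \<Rightarrow> nat \<Rightarrow> nat \<Rightarrow> int" where
  "zero_cols A S = (\<lambda>i j. if j \<in> S then 0 else A i j)"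

end

theory Submission
  imports Defs "HOL-Library.FuncSet"
begin

text \<open>For a set \<open>T\<close> of kept columns consider the potential
  \<open>V(T) = \<Sum>\<^sub>z exp (- \<parallel>Frac (z\<^sup>T A\<^sub>T)\<parallel>\<^sup>2 / s)\<close>, \<open>z\<close> ranging over a grid of mesh \<open>1/M\<close> in the
  torus \<open>(\<real>/\<int>)\<^sup>r\<close>, so that \<open>1 \<le> V(T) \<le> M\<^sup>r\<close>. If some \<open>y\<close> puts more than a \<open>1/s\<close> share of
  \<open>\<parallel>Frac (y\<^sup>T A\<^sub>T)\<parallel>\<^sup>2\<close> on a column \<open>j \<in> T\<close>, then multiplying \<open>y\<close> by a suitable integer and
  rounding to the grid gives a grid point \<open>z\<^sub>0\<close> with \<open>\<bar>Frac (z\<^sub>0\<^sup>T A)\<^sub>j\<bar> \<ge> 1/8\<close> and energy at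
  most \<open>s\<close>. Comparing each grid point with its translates by \<open>\<plusminus>z\<^sub>0\<close> (parallelogram inequality
  for \<open>Frac\<close>) shows that column \<open>j\<close> carries a fixed fraction of the weight of \<open>V(T)\<close>, so
  dropping \<open>j\<close> multiplies the potential by \<open>1 + 1/(1024 s)\<close>. Hence at most
  \<open>O(r s log M) = O(r s log n)\<close> columns are ever dropped.\<close>

section \<open>Fractional parts\<close>

lemma Frac_bounds: "- 1/2 < Frac x \<and> Frac x \<le> 1/2"
proof -
  have "x - 1/2 \<le> of_int \<lceil>x - 1/2\<rceil>" by (rule le_of_int_ceiling)
  moreover have "of_int \<lceil>x - 1/2\<rceil> < x - 1/2 + 1" by linarith
  ultimately show ?thesis unfolding Frac_def nint_def by linarith
qed

lemma Frac_add_of_int: "Frac (x + of_int m) = Frac x"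
proof -
  have "\<lceil>x + of_int m - 1/2\<rceil> = \<lceil>x - 1/2\<rceil> + m"
    by (metis add.commute add_diff_eq ceiling_add_of_int)
  then show ?thesis unfolding Frac_def nint_def by simp
qed

lemma Frac_eq_if_diff_Ints:
  assumes "x - y \<in> \<int>"
  shows "Frac x = Frac y"
proof -
  from assms obtain m where "x = y + of_int m" by (auto elim!: Ints_cases simp: algebra_simps)
  then show ?thesis by (simp add: Frac_add_of_int)
qed

lemma Frac_0 [simp]: "Frac 0 = 0"
proof -
  have "\<lceil>- (1/2::real)\<rceil> = 0" by (simp add: ceiling_eq_iff)
  then show ?thesis unfolding Frac_def nint_def by simp
qed

lemma abs_Frac_le_dist_int: "\<bar>Frac x\<bar> \<le> \<bar>x - of_int m\<bar>"
proof (cases "nint x = m")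
  case True
  then show ?thesis by (simp add: Frac_def)
next
  case False
  then have "\<bar>real_of_int (nint x - m)\<bar> \<ge> 1" by linarith
  moreover have "x - of_int m = Frac x + of_int (nint x - m)" unfolding Frac_def by simp
  ultimately show ?thesis using Frac_bounds[of x] by linarith
qed

lemma abs_Frac_le: "\<bar>Frac x\<bar> \<le> \<bar>x\<bar>"
  using abs_Frac_le_dist_int[of x 0] by simp

lemma abs_Frac_eq_if_abs_le_half:
  assumes "\<bar>x\<bar> \<le> 1/2"
  shows "\<bar>Frac x\<bar> = \<bar>x\<bar>"
proof -
  have "\<bar>x\<bar> \<le> \<bar>Frac x\<bar>"
  proof (cases "nint x = 0")
    case False
    then have "\<bar>real_of_int (nint x)\<bar> \<ge> 1" by linarith
    then show ?thesis using assms unfolding Frac_def by linarith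
  qed (simp add: Frac_def)
  then show ?thesis using abs_Frac_le[of x] by simp
qed

lemma abs_Frac_add_le: "\<bar>Frac (x + y)\<bar> \<le> \<bar>Frac x + Frac y\<bar>"
  using abs_Frac_le_dist_int[of "x + y" "nint x + nint y"] by (simp add: Frac_def)

lemma abs_Frac_diff_le: "\<bar>Frac (x - y)\<bar> \<le> \<bar>Frac x - Frac y\<bar>"
  using abs_Frac_le_dist_int[of "x - y" "nint x - nint y"] by (simp add: Frac_def)

lemma abs_Frac_diff_le_add: "\<bar>Frac (x - y)\<bar> \<le> \<bar>Frac x\<bar> + \<bar>Frac y\<bar>"
  using abs_Frac_diff_le[of x y] by linarith

lemma abs_abs_Frac_diff_le: "\<bar>\<bar>Frac x\<bar> - \<bar>Frac y\<bar>\<bar> \<le> \<bar>x - y\<bar>"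
proof -
  have "\<bar>Frac x\<bar> \<le> \<bar>Frac y\<bar> + \<bar>x - y\<bar>"
    using abs_Frac_diff_le_add[of y "y - x"] abs_Frac_le[of "y - x"] by simp
  moreover have "\<bar>Frac y\<bar> \<le> \<bar>Frac x\<bar> + \<bar>x - y\<bar>"
    using abs_Frac_diff_le_add[of x "x - y"] abs_Frac_le[of "x - y"] by simp
  ultimately show ?thesis by linarith
qed

lemma Frac_parallelogram:
  "(Frac (x + y))\<^sup>2 + (Frac (x - y))\<^sup>2 \<le> 2 * (Frac x)\<^sup>2 + 2 * (Frac y)\<^sup>2"
proof -
  have "(Frac (x + y))\<^sup>2 \<le> (Frac x + Frac y)\<^sup>2"
    using abs_Frac_add_le by (metis abs_ge_zero power2_abs power_mono)
  moreover have "(Frac (x - y))\<^sup>2 \<le> (Frac x - Frac y)\<^sup>2"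
    using abs_Frac_diff_le by (metis abs_ge_zero power2_abs power_mono)
  ultimately show ?thesis by (simp add: power2_eq_square algebra_simps)
qed

lemma abs_Frac_of_nat_mult_le: "\<bar>Frac (of_nat m * x)\<bar> \<le> of_nat m * \<bar>Frac x\<bar>"
proof -
  have "\<bar>Frac (of_nat m * x)\<bar> \<le> \<bar>of_nat m * x - of_int (int m * nint x)\<bar>"
    by (rule abs_Frac_le_dist_int)
  also have "of_nat m * x - of_int (int m * nint x) = of_nat m * Frac x"
    by (simp add: Frac_def algebra_simps)
  finally show ?thesis by (simp add: abs_mult)
qed

lemma abs_Frac_of_nat_mult_eq:
  assumes "of_nat m * \<bar>Frac x\<bar> \<le> 1/2"
  shows "\<bar>Frac (of_nat m * x)\<bar> = of_nat m * \<bar>Frac x\<bar>"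
proof -
  have "of_nat m * x = of_nat m * Frac x + of_int (int m * nint x)"
    by (simp add: Frac_def algebra_simps)
  then have "Frac (of_nat m * x) = Frac (of_nat m * Frac x)"
    by (metis Frac_add_of_int)
  then show ?thesis using assms abs_Frac_eq_if_abs_le_half[of "of_nat m * Frac x"]
    by (simp add: abs_mult)
qed

lemma vecmat_add: "vecmat r (\<lambda>i. y i + y' i) A k = vecmat r y A k + vecmat r y' A k"
  unfolding vecmat_def by (simp add: sum.distrib algebra_simps)

lemma vecmat_diff: "vecmat r (\<lambda>i. y i - y' i) A k = vecmat r y A k - vecmat r y' A k"
  unfolding vecmat_def by (simp add: sum_subtractf algebra_simps)

lemma vecmat_mult: "vecmat r (\<lambda>i. a * y i) A k = a * vecmat r y A k"
  unfolding vecmat_def by (simp add: sum_distrib_left algebra_simps)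

lemma vecmat_Ints: "(\<And>i. i < r \<Longrightarrow> y i \<in> \<int>) \<Longrightarrow> vecmat r y A k \<in> \<int>"
  unfolding vecmat_def by (intro Ints_sum Ints_mult) auto

lemma Frac_vecmat_eq_if_diff_Ints:
  assumes "\<And>i. i < r \<Longrightarrow> y i - y' i \<in> \<int>"
  shows "Frac (vecmat r y A k) = Frac (vecmat r y' A k)"
  using vecmat_Ints[OF assms] by (intro Frac_eq_if_diff_Ints) (simp add: vecmat_diff)

lemma abs_vecmat_le:
  assumes "\<And>i. i < r \<Longrightarrow> \<bar>y i\<bar> \<le> a" and "\<And>i. i < r \<Longrightarrow> \<bar>real_of_int (A i k)\<bar> \<le> B"
  shows "\<bar>vecmat r y A k\<bar> \<le> real r * a * B"
proof -
  have "\<bar>vecmat r y A k\<bar> \<le> (\<Sum>i<r. \<bar>y i * real_of_int (A i k)\<bar>)"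
    unfolding vecmat_def by (rule sum_abs)
  also have "\<dots> \<le> (\<Sum>i<r. a * B)"
  proof (rule sum_mono)
    fix i assume "i \<in> {..<r}"
    then have "\<bar>y i\<bar> \<le> a" "\<bar>real_of_int (A i k)\<bar> \<le> B" using assms by auto
    moreover have "0 \<le> a" using \<open>\<bar>y i\<bar> \<le> a\<close> by linarith
    ultimately show "\<bar>y i * real_of_int (A i k)\<bar> \<le> a * B"
      unfolding abs_mult by (intro mult_mono) auto
  qed
  finally show ?thesis by simp
qed

lemma vecmat_zero_cols: "vecmat r y (zero_cols A S) k = (if k \<in> S then 0 else vecmat r y A k)"
  unfolding vecmat_def zero_cols_def by simp

section \<open>A grid on the torus\<close>

text \<open>The points \<open>z / M\<close> with \<open>z \<in> {0..<M}\<^sup>r\<close> form a subgroup of the torus \<open>(\<real>/\<int>)\<^sup>r\<close>;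
  \<open>grid_add\<close> and \<open>grid_neg\<close> are its group operations.\<close>

definition grid :: "nat \<Rightarrow> nat \<Rightarrow> (nat \<Rightarrow> nat) set" where
  "grid r M = {..<r} \<rightarrow>\<^sub>E {..<M}"

definition grid_point :: "nat \<Rightarrow> (nat \<Rightarrow> nat) \<Rightarrow> nat \<Rightarrow> real" where
  "grid_point M z i = real (z i) / real M"

definition grid_add :: "nat \<Rightarrow> nat \<Rightarrow> (nat \<Rightarrow> nat) \<Rightarrow> (nat \<Rightarrow> nat) \<Rightarrow> nat \<Rightarrow> nat" where
  "grid_add r M z w = (\<lambda>i\<in>{..<r}. (z i + w i) mod M)"

definition grid_neg :: "nat \<Rightarrow> nat \<Rightarrow> (nat \<Rightarrow> nat) \<Rightarrow> nat \<Rightarrow> nat" where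
  "grid_neg r M w = (\<lambda>i\<in>{..<r}. (M - w i) mod M)"

lemma finite_grid: "finite (grid r M)"
  unfolding grid_def by (simp add: finite_PiE)

lemma card_grid: "card (grid r M) = M ^ r"
  unfolding grid_def by (simp add: card_PiE)

lemma grid_add_in_grid: "0 < M \<Longrightarrow> grid_add r M z w \<in> grid r M"
  unfolding grid_def grid_add_def by (simp add: restrict_PiE_iff)

lemma grid_neg_in_grid: "0 < M \<Longrightarrow> grid_neg r M w \<in> grid r M"
  unfolding grid_def grid_neg_def by (simp add: restrict_PiE_iff)

lemma grid_add_neg_cancel:
  assumes "z \<in> grid r M" "w \<in> grid r M"
  shows "grid_add r M (grid_add r M z w) (grid_neg r M w) = z"
proof
  fix i
  show "grid_add r M (grid_add r M z w) (grid_neg r M w) i = z i"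
  proof (cases "i < r")
    case True
    then have "z i < M" "w i < M"
      using PiE_mem[OF assms(1)[unfolded grid_def]] PiE_mem[OF assms(2)[unfolded grid_def]] by auto
    have "grid_add r M (grid_add r M z w) (grid_neg r M w) i
        = ((z i + w i) mod M + (M - w i) mod M) mod M"
      using True by (simp only: grid_add_def grid_neg_def restrict_apply' lessThan_iff)
    also have "\<dots> = (z i + w i + (M - w i)) mod M" by (rule mod_add_eq)
    also have "z i + w i + (M - w i) = z i + M" using \<open>w i < M\<close> by simp
    also have "(z i + M) mod M = z i" using \<open>z i < M\<close> by simp
    finally show ?thesis .
  next
    case False
    then have "z i = undefined" using PiE_arb[OF assms(1)[unfolded grid_def]] by simp
    with False show ?thesis by (simp add: grid_add_def)
  qed
qed

lemma inj_on_grid_add: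
  assumes "w \<in> grid r M"
  shows "inj_on (\<lambda>z. grid_add r M z w) (grid r M)"
  by (rule inj_on_inverseI[where g = "\<lambda>z. grid_add r M z (grid_neg r M w)"])
    (erule grid_add_neg_cancel[OF _ assms])

lemma grid_point_add_diff_Ints:
  assumes "0 < M" "i < r"
  shows "grid_point M (grid_add r M z w) i - (grid_point M z i + grid_point M w i) \<in> \<int>"
proof -
  have "real ((z i + w i) div M) * real M + real ((z i + w i) mod M) = real (z i) + real (w i)"
    by (simp flip: of_nat_mult of_nat_add)
  then have "grid_point M (grid_add r M z w) i - (grid_point M z i + grid_point M w i)
      = - real ((z i + w i) div M)"
    using assms by (simp add: grid_point_def grid_add_def field_simps)
  then show ?thesis by (metis Ints_minus Ints_of_nat)
qed

lemma grid_point_neg_add_Ints: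
  assumes "0 < M" "w \<in> grid r M" "i < r"
  shows "grid_point M (grid_neg r M w) i + grid_point M w i \<in> \<int>"
proof (cases "w i = 0")
  case False
  with assms have "(M - w i) mod M = M - w i" "w i < M" by (auto simp: grid_def)
  then have "grid_point M (grid_neg r M w) i + grid_point M w i = 1"
    using assms by (simp add: grid_point_def grid_neg_def of_nat_diff field_simps)
  then show ?thesis by simp
qed (use assms in \<open>simp add: grid_point_def grid_neg_def\<close>)

lemma Frac_vecmat_grid_add:
  assumes "0 < M"
  shows "Frac (vecmat r (grid_point M (grid_add r M z w)) A k)
    = Frac (vecmat r (grid_point M z) A k + vecmat r (grid_point M w) A k)"
  unfolding vecmat_add[symmetric]
  by (intro Frac_vecmat_eq_if_diff_Ints grid_point_add_diff_Ints assms)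

lemma Frac_vecmat_grid_sub:
  assumes "0 < M" "w \<in> grid r M"
  shows "Frac (vecmat r (grid_point M (grid_add r M z (grid_neg r M w))) A k)
    = Frac (vecmat r (grid_point M z) A k - vecmat r (grid_point M w) A k)"
proof -
  have "grid_point M (grid_add r M z (grid_neg r M w)) i - (grid_point M z i - grid_point M w i)
      \<in> \<int>" if "i < r" for i
    using Ints_add[OF grid_point_add_diff_Ints[OF assms(1) that, of z "grid_neg r M w"]
        grid_point_neg_add_Ints[OF assms that]]
    by (simp add: algebra_simps)
  then show ?thesis
    unfolding vecmat_diff[symmetric] by (rule Frac_vecmat_eq_if_diff_Ints)
qed

lemma exists_grid_point_round:
  assumes "0 < M"
  shows "\<exists>z\<in>grid r M. \<exists>e. (\<forall>i. \<bar>e i\<bar> \<le> 1 / real M) \<and> (\<forall>i<r. grid_point M z i - (y i - e i) \<in> \<int>)"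
proof -
  define z where "z = (\<lambda>i\<in>{..<r}. nat (\<lfloor>real M * y i\<rfloor> mod int M))"
  define e where "e i = y i - of_int \<lfloor>real M * y i\<rfloor> / real M" for i
  have "z \<in> grid r M"
    using assms by (simp add: z_def grid_def restrict_PiE_iff nat_less_iff)
  moreover have "\<bar>e i\<bar> \<le> 1 / real M" for i
  proof -
    have "e i = (real M * y i - of_int \<lfloor>real M * y i\<rfloor>) / real M"
      using assms by (simp add: e_def field_simps)
    moreover have "0 \<le> real M * y i - of_int \<lfloor>real M * y i\<rfloor>"
      and "real M * y i - of_int \<lfloor>real M * y i\<rfloor> \<le> 1" by linarith+
    ultimately show ?thesis using assms by (simp add: divide_right_mono)
  qed
  moreover have "grid_point M z i - (y i - e i) \<in> \<int>" if "i < r" for i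
  proof -
    define F where "F = \<lfloor>real M * y i\<rfloor>"
    have "real_of_int (F mod int M) = of_int F - real M * of_int (F div int M)"
      unfolding minus_mult_div_eq_mod[symmetric] by simp
    moreover have "real (z i) = of_int (F mod int M)"
      using that assms by (simp add: z_def F_def)
    ultimately have "grid_point M z i - (y i - e i) = - of_int (F div int M)"
      using assms by (simp add: grid_point_def e_def F_def field_simps)
    then show ?thesis by (metis Ints_minus Ints_of_int)
  qed
  ultimately show ?thesis by blast
qed

lemma exists_grid_point_near:
  assumes "0 < M" and A_bound: "\<forall>i<r. \<forall>k<n. \<bar>real_of_int (A i k)\<bar> \<le> B"
  shows "\<exists>z\<in>grid r M. \<forall>k<n.
    \<bar>\<bar>Frac (vecmat r (grid_point M z) A k)\<bar> - \<bar>Frac (vecmat r y A k)\<bar>\<bar> \<le> real r * B / real M"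
proof -
  obtain z e where "z \<in> grid r M" and e_bound: "\<And>i. \<bar>e i\<bar> \<le> 1 / real M"
    and "\<And>i. i < r \<Longrightarrow> grid_point M z i - (y i - e i) \<in> \<int>"
    using exists_grid_point_round[OF assms(1)] by blast
  then have Frac_eq: "Frac (vecmat r (grid_point M z) A k) = Frac (vecmat r y A k - vecmat r e A k)"
    for k
    unfolding vecmat_diff[symmetric] by (intro Frac_vecmat_eq_if_diff_Ints)
  have "\<bar>\<bar>Frac (vecmat r (grid_point M z) A k)\<bar> - \<bar>Frac (vecmat r y A k)\<bar>\<bar> \<le> real r * B / real M"
    if "k < n" for k
  proof -
    have "\<bar>\<bar>Frac (vecmat r (grid_point M z) A k)\<bar> - \<bar>Frac (vecmat r y A k)\<bar>\<bar> \<le> \<bar>vecmat r e A k\<bar>"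
      using abs_abs_Frac_diff_le[of "vecmat r y A k - vecmat r e A k" "vecmat r y A k"]
      by (simp add: Frac_eq)
    also have "\<dots> \<le> real r * (1 / real M) * B"
      using A_bound that e_bound by (intro abs_vecmat_le) auto
    finally show ?thesis by simp
  qed
  then show ?thesis using \<open>z \<in> grid r M\<close> by blast
qed

lemma sum_comp_le_if_inj_on_image_subset:
  fixes g :: "'a \<Rightarrow> real"
  assumes "finite D" "inj_on \<sigma> E" "\<sigma> ` E \<subseteq> D" "\<And>z. z \<in> D \<Longrightarrow> 0 \<le> g z"
  shows "(\<Sum>z\<in>E. g (\<sigma> z)) \<le> (\<Sum>z\<in>D. g z)"
proof -
  have "(\<Sum>z\<in>E. g (\<sigma> z)) = (\<Sum>z\<in>\<sigma> ` E. g z)" using assms(2) by (simp add: sum.reindex)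
  also have "\<dots> \<le> (\<Sum>z\<in>D. g z)" using assms by (intro sum_mono2) auto
  finally show ?thesis .
qed

text \<open>The maps \<open>\<sigma>\<close> and \<open>\<sigma>'\<close> send the set where \<open>h < \<tau>\<close> into its complement, so that set carries
  at most the fraction \<open>1 / (1 + \<alpha>)\<close> of the total weight.\<close>

lemma weighted_sum_sq_ge_if_shifts_escape:
  fixes g h :: "'a \<Rightarrow> real"
  assumes "finite G"
    and "inj_on \<sigma> G" "\<sigma> ` G \<subseteq> G" "inj_on \<sigma>' G" "\<sigma>' ` G \<subseteq> G"
    and g_nonneg: "\<And>z. z \<in> G \<Longrightarrow> 0 \<le> g z"
    and "0 < \<alpha>" and g_shift: "\<And>z. z \<in> G \<Longrightarrow> \<alpha> * g z \<le> (g (\<sigma> z) + g (\<sigma>' z)) / 2"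
    and "0 \<le> \<tau>" and escape: "\<And>z. z \<in> G \<Longrightarrow> h z < \<tau> \<Longrightarrow> \<tau> \<le> h (\<sigma> z) \<and> \<tau> \<le> h (\<sigma>' z)"
  shows "\<tau>\<^sup>2 * (\<alpha> / (1 + \<alpha>)) * (\<Sum>z\<in>G. g z) \<le> (\<Sum>z\<in>G. g z * (h z)\<^sup>2)"
proof -
  define E where "E = {z \<in> G. h z < \<tau>}"
  have "E \<subseteq> G" by (auto simp: E_def)
  have "\<sigma> ` E \<subseteq> G - E" "\<sigma>' ` E \<subseteq> G - E"
    using escape assms(3,5) by (fastforce simp: E_def)+
  then have "(\<Sum>z\<in>E. g (\<sigma> z)) \<le> (\<Sum>z\<in>G - E. g z)" "(\<Sum>z\<in>E. g (\<sigma>' z)) \<le> (\<Sum>z\<in>G - E. g z)"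
    using assms(1) g_nonneg inj_on_subset[OF assms(2) \<open>E \<subseteq> G\<close>] inj_on_subset[OF assms(4) \<open>E \<subseteq> G\<close>]
    by (auto intro: sum_comp_le_if_inj_on_image_subset)
  moreover have "\<alpha> * (\<Sum>z\<in>E. g z) \<le> ((\<Sum>z\<in>E. g (\<sigma> z)) + (\<Sum>z\<in>E. g (\<sigma>' z))) / 2"
    using sum_mono[of E "\<lambda>z. \<alpha> * g z" "\<lambda>z. (g (\<sigma> z) + g (\<sigma>' z)) / 2"] g_shift \<open>E \<subseteq> G\<close>
    by (auto simp: sum_distrib_left sum.distrib sum_divide_distrib[symmetric])
  moreover have "(\<Sum>z\<in>G. g z) = (\<Sum>z\<in>E. g z) + (\<Sum>z\<in>G - E. g z)"
    using sum.subset_diff[where g = g, OF \<open>E \<subseteq> G\<close> assms(1)] by linarith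
  ultimately have mass: "(\<alpha> / (1 + \<alpha>)) * (\<Sum>z\<in>G. g z) \<le> (\<Sum>z\<in>G - E. g z)"
    using \<open>0 < \<alpha>\<close> by (simp add: field_simps)
  have "\<tau>\<^sup>2 * (\<Sum>z\<in>G - E. g z) \<le> (\<Sum>z\<in>G - E. g z * (h z)\<^sup>2)"
    unfolding sum_distrib_left
  proof (rule sum_mono)
    fix z assume "z \<in> G - E"
    then have "\<tau>\<^sup>2 \<le> (h z)\<^sup>2" using \<open>0 \<le> \<tau>\<close> by (intro power_mono) (auto simp: E_def)
    then show "\<tau>\<^sup>2 * g z \<le> g z * (h z)\<^sup>2" using g_nonneg \<open>z \<in> G - E\<close> by (simp add: mult_left_mono mult.commute)
  qed
  also have "\<dots> \<le> (\<Sum>z\<in>G. g z * (h z)\<^sup>2)"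
    using assms(1) g_nonneg by (intro sum_mono2) auto
  finally show ?thesis
    using mult_left_mono[OF mass, of "\<tau>\<^sup>2"] by (simp add: mult.assoc)
qed

lemma exp_midpoint_le: "exp ((u + v) / 2) \<le> (exp u + exp v :: real) / 2"
proof -
  have "exp u * exp v = (exp ((u + v) / 2))\<^sup>2"
    by (simp add: power2_eq_square exp_add[symmetric])
  then show ?thesis using arith_geo_mean_sqrt[of "exp u" "exp v"] by simp
qed

section \<open>The potential\<close>

definition frac_energy :: "nat \<Rightarrow> (nat \<Rightarrow> nat \<Rightarrow> int) \<Rightarrow> nat set \<Rightarrow> (nat \<Rightarrow> real) \<Rightarrow> real" where
  "frac_energy r A T y = (\<Sum>k\<in>T. (Frac (vecmat r y A k))\<^sup>2)"

text \<open>A discretisation of the Gaussian mass \<open>\<integral> exp (- \<parallel>Frac (y\<^sup>T A\<^sub>T)\<parallel>\<^sup>2 / s) dy\<close> over the torus.\<close>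

definition potential :: "nat \<Rightarrow> nat \<Rightarrow> real \<Rightarrow> (nat \<Rightarrow> nat \<Rightarrow> int) \<Rightarrow> nat set \<Rightarrow> real" where
  "potential r M s A T = (\<Sum>z\<in>grid r M. exp (- frac_energy r A T (grid_point M z) / s))"

lemma frac_energy_nonneg: "0 \<le> frac_energy r A T y"
  unfolding frac_energy_def by (simp add: sum_nonneg)

lemma frac_energy_remove:
  "finite T \<Longrightarrow> j \<in> T \<Longrightarrow>
    frac_energy r A T y = (Frac (vecmat r y A j))\<^sup>2 + frac_energy r A (T - {j}) y"
  unfolding frac_energy_def by (simp add: sum.remove)

lemma frac_energy_grid_shifts:
  assumes "0 < M" "w \<in> grid r M"
  shows "frac_energy r A T (grid_point M (grid_add r M z w))
      + frac_energy r A T (grid_point M (grid_add r M z (grid_neg r M w)))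
    \<le> 2 * frac_energy r A T (grid_point M z) + 2 * frac_energy r A T (grid_point M w)"
  unfolding frac_energy_def Frac_vecmat_grid_sub[OF assms]
  unfolding Frac_vecmat_grid_add[OF assms(1)] sum.distrib[symmetric] sum_distrib_left
  by (intro sum_mono Frac_parallelogram)

lemma potential_ge_one:
  assumes "0 < M"
  shows "1 \<le> potential r M s A T"
proof -
  define z0 where "z0 = (\<lambda>i\<in>{..<r}. 0::nat)"
  have "z0 \<in> grid r M" using assms by (simp add: z0_def grid_def restrict_PiE_iff)
  then have "exp (- frac_energy r A T (grid_point M z0) / s) \<le> potential r M s A T"
    unfolding potential_def by (rule member_le_sum[OF _ _ finite_grid]) simp
  moreover have "frac_energy r A T (grid_point M z0) = 0"
    by (simp add: frac_energy_def vecmat_def grid_point_def z0_def)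
  ultimately show ?thesis by simp
qed

lemma potential_le_card:
  assumes "0 \<le> s"
  shows "potential r M s A T \<le> real M ^ r"
proof -
  have "exp (- frac_energy r A T (grid_point M z) / s) \<le> 1" for z
    using frac_energy_nonneg[of r A T] assms by (simp add: divide_nonneg_nonneg)
  then have "potential r M s A T \<le> real (card (grid r M)) * 1"
    unfolding potential_def by (intro sum_bounded_above)
  then show ?thesis by (simp add: card_grid)
qed

lemma potential_remove_ge:
  assumes "0 < s" "finite T" "j \<in> T"
  shows "potential r M s A T
      + (\<Sum>z\<in>grid r M. exp (- frac_energy r A T (grid_point M z) / s)
          * (Frac (vecmat r (grid_point M z) A j))\<^sup>2) / s
    \<le> potential r M s A (T - {j})"
proof -
  have "exp (- frac_energy r A T y / s) + exp (- frac_energy r A T y / s) * (Frac (vecmat r y A j))\<^sup>2 / s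
      \<le> exp (- frac_energy r A (T - {j}) y / s)" for y
  proof -
    have "- frac_energy r A (T - {j}) y / s
        = - frac_energy r A T y / s + (Frac (vecmat r y A j))\<^sup>2 / s"
      using assms(1) by (simp add: frac_energy_remove[OF assms(2,3)] field_simps)
    then have "exp (- frac_energy r A (T - {j}) y / s)
        = exp (- frac_energy r A T y / s) * exp ((Frac (vecmat r y A j))\<^sup>2 / s)"
      by (simp only: exp_add)
    moreover have "exp (- frac_energy r A T y / s) * (1 + (Frac (vecmat r y A j))\<^sup>2 / s)
        \<le> exp (- frac_energy r A T y / s) * exp ((Frac (vecmat r y A j))\<^sup>2 / s)"
      by (rule mult_left_mono[OF exp_ge_add_one_self]) simp
    ultimately show ?thesis by (simp add: algebra_simps)
  qed
  then show ?thesis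
    unfolding potential_def sum_divide_distrib sum.distrib[symmetric] by (intro sum_mono)
qed

lemma exp_frac_energy_grid_shifts:
  assumes "0 < s" "0 < M" "w \<in> grid r M"
  shows "exp (- frac_energy r A T (grid_point M w) / s) * exp (- frac_energy r A T (grid_point M z) / s)
    \<le> (exp (- frac_energy r A T (grid_point M (grid_add r M z w)) / s)
        + exp (- frac_energy r A T (grid_point M (grid_add r M z (grid_neg r M w))) / s)) / 2"
proof -
  define q where "q z = frac_energy r A T (grid_point M z) / s" for z
  have "q (grid_add r M z w) + q (grid_add r M z (grid_neg r M w)) \<le> 2 * q w + 2 * q z"
    using divide_right_mono[OF frac_energy_grid_shifts[OF assms(2,3), of A T z], of s] assms(1)
    by (simp add: q_def add_divide_distrib)
  then have "exp (- q w) * exp (- q z)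
      \<le> exp ((- q (grid_add r M z w) + - q (grid_add r M z (grid_neg r M w))) / 2)"
    by (simp add: exp_add[symmetric])
  also have "\<dots> \<le> (exp (- q (grid_add r M z w)) + exp (- q (grid_add r M z (grid_neg r M w)))) / 2"
    by (rule exp_midpoint_le)
  finally show ?thesis by (simp add: q_def)
qed

lemma abs_Frac_vecmat_le_grid_shifts:
  assumes "0 < M" "w \<in> grid r M"
  shows "\<bar>Frac (vecmat r (grid_point M w) A j)\<bar>
      \<le> \<bar>Frac (vecmat r (grid_point M (grid_add r M z w)) A j)\<bar> + \<bar>Frac (vecmat r (grid_point M z) A j)\<bar>"
    and "\<bar>Frac (vecmat r (grid_point M w) A j)\<bar>
      \<le> \<bar>Frac (vecmat r (grid_point M (grid_add r M z (grid_neg r M w))) A j)\<bar>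
        + \<bar>Frac (vecmat r (grid_point M z) A j)\<bar>"
proof -
  let ?u = "\<lambda>z. vecmat r (grid_point M z) A j"
  show "\<bar>Frac (?u w)\<bar> \<le> \<bar>Frac (?u (grid_add r M z w))\<bar> + \<bar>Frac (?u z)\<bar>"
    using abs_Frac_diff_le_add[of "?u z + ?u w" "?u z"] by (simp add: Frac_vecmat_grid_add assms(1))
  have "\<bar>Frac (?u w)\<bar> \<le> \<bar>Frac (?u z - ?u w)\<bar> + \<bar>Frac (?u z)\<bar>"
    using abs_Frac_diff_le_add[of "?u z" "?u z - ?u w"] by simp
  then show "\<bar>Frac (?u w)\<bar> \<le> \<bar>Frac (?u (grid_add r M z (grid_neg r M w)))\<bar> + \<bar>Frac (?u z)\<bar>"
    by (simp only: Frac_vecmat_grid_sub assms)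
qed

lemma potential_weighted_Frac_sq_ge:
  assumes "0 < s" "0 < M" "z0 \<in> grid r M"
    and z0_far: "1/8 \<le> \<bar>Frac (vecmat r (grid_point M z0) A j)\<bar>"
    and z0_energy: "frac_energy r A T (grid_point M z0) \<le> s"
  shows "potential r M s A T / 1024
    \<le> (\<Sum>z\<in>grid r M. exp (- frac_energy r A T (grid_point M z) / s)
          * (Frac (vecmat r (grid_point M z) A j))\<^sup>2)"
proof -
  define g where "g z = exp (- frac_energy r A T (grid_point M z) / s)" for z
  define h where "h z = \<bar>Frac (vecmat r (grid_point M z) A j)\<bar>" for z
  have "exp (- 1) \<le> g z0" using z0_energy assms(1) by (simp add: g_def field_simps)
  moreover have "1/3 \<le> exp (- 1 :: real)"
    using exp_le by (simp add: exp_minus field_simps)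
  ultimately have quarter: "1/4 \<le> g z0 / (1 + g z0)"
    by (simp add: field_simps)
  have gain: "(1/16)\<^sup>2 * (g z0 / (1 + g z0)) * (\<Sum>z\<in>grid r M. g z)
      \<le> (\<Sum>z\<in>grid r M. g z * (h z)\<^sup>2)"
  proof (rule weighted_sum_sq_ge_if_shifts_escape)
    show "inj_on (\<lambda>z. grid_add r M z z0) (grid r M)"
      "inj_on (\<lambda>z. grid_add r M z (grid_neg r M z0)) (grid r M)"
      using assms(2,3) by (auto intro!: inj_on_grid_add grid_neg_in_grid)
    show "g z0 * g z \<le> (g (grid_add r M z z0) + g (grid_add r M z (grid_neg r M z0))) / 2" for z
      unfolding g_def by (rule exp_frac_energy_grid_shifts[OF assms(1-3)])
    show "1/16 \<le> h (grid_add r M z z0) \<and> 1/16 \<le> h (grid_add r M z (grid_neg r M z0))"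
      if "h z < 1/16" for z
      using abs_Frac_vecmat_le_grid_shifts[OF assms(2,3), of A j z] z0_far that
      unfolding h_def by linarith
  qed (use assms(2) in \<open>auto simp: g_def finite_grid grid_add_in_grid\<close>)
  have "0 \<le> (\<Sum>z\<in>grid r M. g z)" by (simp add: g_def sum_nonneg)
  then have "(1/16)\<^sup>2 * (1/4) * (\<Sum>z\<in>grid r M. g z)
      \<le> (1/16)\<^sup>2 * (g z0 / (1 + g z0)) * (\<Sum>z\<in>grid r M. g z)"
    using quarter by (intro mult_right_mono mult_left_mono) auto
  then have "(1/16)\<^sup>2 * (1/4) * (\<Sum>z\<in>grid r M. g z) \<le> (\<Sum>z\<in>grid r M. g z * (h z)\<^sup>2)"
    using gain by (rule order_trans)
  then show ?thesis
    unfolding potential_def g_def h_def by (simp add: power2_eq_square)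
qed

lemma potential_remove_far_ge:
  assumes "0 < s" "0 < M" "finite T" "j \<in> T" "z0 \<in> grid r M"
    and "1/8 \<le> \<bar>Frac (vecmat r (grid_point M z0) A j)\<bar>"
    and "frac_energy r A T (grid_point M z0) \<le> s"
  shows "(1 + 1 / (1024 * s)) * potential r M s A T \<le> potential r M s A (T - {j})"
proof -
  let ?W = "\<Sum>z\<in>grid r M. exp (- frac_energy r A T (grid_point M z) / s)
    * (Frac (vecmat r (grid_point M z) A j))\<^sup>2"
  have "potential r M s A T + ?W / s \<le> potential r M s A (T - {j})"
    by (rule potential_remove_ge[OF assms(1,3,4)])
  moreover have "potential r M s A T / 1024 / s \<le> ?W / s"
    using assms(1) by (intro divide_right_mono potential_weighted_Frac_sq_ge[OF assms(1,2,5-7)]) simp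
  moreover have "(1 + 1 / (1024 * s)) * potential r M s A T
      = potential r M s A T + potential r M s A T / 1024 / s"
    using assms(1) by (simp add: field_simps)
  ultimately show ?thesis by linarith
qed

section \<open>Column selection\<close>

lemma exists_nat_mult_between:
  fixes t :: real
  assumes "0 < t" "t \<le> 1/2"
  shows "\<exists>m::nat. 1/4 \<le> m * t \<and> m * t \<le> 1/2"
proof -
  define m where "m = nat \<lfloor>1 / (2 * t)\<rfloor>"
  have "1 \<le> 1 / (2 * t)" using assms by (simp add: field_simps)
  then have "1 \<le> \<lfloor>1 / (2 * t)\<rfloor>" by (simp add: one_le_floor)
  then have m_ge: "1 \<le> real m" unfolding m_def by linarith
  have m_le: "real m \<le> 1 / (2 * t)" and m_gt: "1 / (2 * t) - 1 < real m"
    using \<open>1 \<le> 1 / (2 * t)\<close> unfolding m_def by linarith+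
  have "real m * t \<le> 1/2" using m_le assms by (simp add: field_simps)
  moreover have "1/2 - t < real m * t"
    using mult_strict_right_mono[OF m_gt \<open>0 < t\<close>] assms by (simp add: left_diff_distrib)
  moreover have "t \<le> real m * t" using m_ge assms by simp
  ultimately have "1/4 \<le> real m * t \<and> real m * t \<le> 1/2" by linarith
  then show ?thesis by blast
qed

lemma exists_rescaled_violation:
  assumes "frac_energy r A T y < s * (Frac (vecmat r y A j))\<^sup>2"
  shows "\<exists>y'. 1/4 \<le> \<bar>Frac (vecmat r y' A j)\<bar> \<and> frac_energy r A T y' \<le> s / 4"
proof -
  define t where "t = \<bar>Frac (vecmat r y A j)\<bar>"
  have "0 < s * t\<^sup>2" using assms frac_energy_nonneg[of r A T y] by (simp add: t_def)
  then have "0 < s" "0 < t" by (auto simp: t_def zero_less_mult_iff)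
  moreover have "t \<le> 1/2"
    using Frac_bounds[of "vecmat r y A j"] unfolding t_def abs_le_iff by linarith
  ultimately obtain m :: nat where m: "1/4 \<le> m * t" "m * t \<le> 1/2"
    using exists_nat_mult_between by blast
  define y' where "y' = (\<lambda>i. real m * y i)"
  have vecmat_y': "vecmat r y' A k = real m * vecmat r y A k" for k
    unfolding y'_def by (rule vecmat_mult)
  have "\<bar>Frac (vecmat r y' A j)\<bar> = m * t"
    unfolding vecmat_y' t_def using m(2) by (intro abs_Frac_of_nat_mult_eq) (simp add: t_def)
  moreover have "frac_energy r A T y' \<le> s / 4"
  proof -
    have "(Frac (vecmat r y' A k))\<^sup>2 \<le> (real m)\<^sup>2 * (Frac (vecmat r y A k))\<^sup>2" for k
      unfolding vecmat_y'
      by (metis abs_Frac_of_nat_mult_le abs_ge_zero power2_abs power_mono power_mult_distrib)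
    then have "frac_energy r A T y' \<le> (real m)\<^sup>2 * frac_energy r A T y"
      unfolding frac_energy_def sum_distrib_left by (intro sum_mono)
    also have "\<dots> \<le> (real m)\<^sup>2 * (s * t\<^sup>2)"
      using assms by (intro mult_left_mono) (auto simp: t_def)
    also have "\<dots> = s * (m * t)\<^sup>2" by (simp add: power_mult_distrib)
    also have "\<dots> \<le> s * (1/2)\<^sup>2"
      using m \<open>0 < s\<close> \<open>0 < t\<close> by (intro mult_left_mono power_mono) auto
    finally show ?thesis by (simp add: power2_eq_square)
  qed
  ultimately show ?thesis using m(1) by (intro exI[of _ y']) simp
qed

lemma sum_sq_le_of_abs_le_add:
  fixes a b :: "'a \<Rightarrow> real"
  assumes "\<And>k. k \<in> T \<Longrightarrow> \<bar>a k\<bar> \<le> \<bar>b k\<bar> + \<eta>"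
  shows "(\<Sum>k\<in>T. (a k)\<^sup>2) \<le> 2 * (\<Sum>k\<in>T. (b k)\<^sup>2) + 2 * real (card T) * \<eta>\<^sup>2"
proof -
  have "(a k)\<^sup>2 \<le> 2 * (b k)\<^sup>2 + 2 * \<eta>\<^sup>2" if "k \<in> T" for k
  proof -
    have "(a k)\<^sup>2 \<le> (\<bar>b k\<bar> + \<eta>)\<^sup>2"
      using assms[OF that] by (metis abs_ge_zero power2_abs power_mono)
    moreover have "0 \<le> (\<bar>b k\<bar> - \<eta>)\<^sup>2" by simp
    ultimately show ?thesis by (simp add: power2_eq_square algebra_simps)
  qed
  then have "(\<Sum>k\<in>T. (a k)\<^sup>2) \<le> (\<Sum>k\<in>T. 2 * (b k)\<^sup>2 + 2 * \<eta>\<^sup>2)"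
    by (rule sum_mono)
  then show ?thesis by (simp add: sum.distrib sum_distrib_left)
qed

lemma exists_grid_point_far:
  assumes "1 \<le> s" "0 < M" and A_bound: "\<forall>i<r. \<forall>k<n. \<bar>real_of_int (A i k)\<bar> \<le> B"
    and "8 * real n * real r * B \<le> real M" and "T \<subseteq> {..<n}" "j \<in> T"
    and "frac_energy r A T y < s * (Frac (vecmat r y A j))\<^sup>2"
  shows "\<exists>z0\<in>grid r M. 1/8 \<le> \<bar>Frac (vecmat r (grid_point M z0) A j)\<bar>
    \<and> frac_energy r A T (grid_point M z0) \<le> s"
proof -
  obtain y' where y'_far: "1/4 \<le> \<bar>Frac (vecmat r y' A j)\<bar>"
    and y'_energy: "frac_energy r A T y' \<le> s / 4"
    using exists_rescaled_violation[OF assms(7)] by blast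
  obtain z where "z \<in> grid r M" and near: "\<forall>k<n.
      \<bar>\<bar>Frac (vecmat r (grid_point M z) A k)\<bar> - \<bar>Frac (vecmat r y' A k)\<bar>\<bar> \<le> real r * B / real M"
    using exists_grid_point_near[OF assms(2) A_bound] by blast
  have "0 < n" using assms(5,6) by auto
  have "real r * B / real M \<le> 1 / (8 * real n)"
    using assms(2,4) \<open>0 < n\<close> by (simp add: field_simps)
  then have close: "\<bar>\<bar>Frac (vecmat r (grid_point M z) A k)\<bar> - \<bar>Frac (vecmat r y' A k)\<bar>\<bar>
      \<le> 1 / (8 * real n)" if "k \<in> T" for k
    using near that assms(5) by fastforce
  have "1 / (8 * real n) \<le> 1/8" using \<open>0 < n\<close> by (simp add: field_simps)
  then have "1/8 \<le> \<bar>Frac (vecmat r (grid_point M z) A j)\<bar>"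
    using close[OF assms(6)] y'_far by linarith
  moreover have "frac_energy r A T (grid_point M z) \<le> s"
  proof -
    have "frac_energy r A T (grid_point M z)
        \<le> 2 * frac_energy r A T y' + 2 * real (card T) * (1 / (8 * real n))\<^sup>2"
      unfolding frac_energy_def
      by (intro sum_sq_le_of_abs_le_add) (use close in \<open>fastforce dest: abs_le_D1\<close>)
    moreover have "real (card T) * (1 / (8 * real n))\<^sup>2 \<le> real n * (1 / (8 * real n))\<^sup>2"
      using card_mono[OF _ assms(5)] by (intro mult_right_mono) auto
    moreover have "real n * (1 / (8 * real n))\<^sup>2 \<le> 1/64"
      using \<open>0 < n\<close> by (simp add: power2_eq_square field_simps)
    ultimately show ?thesis using y'_energy assms(1) by linarith
  qed
  ultimately show ?thesis using \<open>z \<in> grid r M\<close> by blast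
qed

lemma potential_remove_unbalanced_ge:
  assumes "1 \<le> s" "0 < M" "\<forall>i<r. \<forall>k<n. \<bar>real_of_int (A i k)\<bar> \<le> B"
    and "8 * real n * real r * B \<le> real M" and "T \<subseteq> {..<n}" "j \<in> T"
    and "frac_energy r A T y < s * (Frac (vecmat r y A j))\<^sup>2"
  shows "(1 + 1 / (1024 * s)) * potential r M s A T \<le> potential r M s A (T - {j})"
proof -
  obtain z0 where "z0 \<in> grid r M" "1/8 \<le> \<bar>Frac (vecmat r (grid_point M z0) A j)\<bar>"
    "frac_energy r A T (grid_point M z0) \<le> s"
    using exists_grid_point_far[OF assms] by blast
  moreover have "0 < s" "finite T" using assms(1,5) finite_subset by auto
  ultimately show ?thesis using potential_remove_far_ge[OF _ assms(2) _ assms(6)] by blast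
qed

definition frac_spread :: "nat \<Rightarrow> nat \<Rightarrow> real \<Rightarrow> (nat \<Rightarrow> nat \<Rightarrow> int) \<Rightarrow> bool" where
  "frac_spread r n s A \<longleftrightarrow> (\<forall>y. \<forall>j<n.
    (Frac (vecmat r y A j))\<^sup>2 \<le> (1 / s) * (\<Sum>k<n. (Frac (vecmat r y A k))\<^sup>2))"

lemma frac_spread_zero_cols_compl:
  assumes "0 < s" "T \<subseteq> {..<n}"
    and balanced: "\<And>y j. j \<in> T \<Longrightarrow> s * (Frac (vecmat r y A j))\<^sup>2 \<le> frac_energy r A T y"
  shows "frac_spread r n s (zero_cols A ({..<n} - T))"
proof -
  have sum_eq: "(\<Sum>k<n. (Frac (vecmat r y (zero_cols A ({..<n} - T)) k))\<^sup>2) = frac_energy r A T y"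
    for y
  proof -
    have "(\<Sum>k<n. (Frac (vecmat r y (zero_cols A ({..<n} - T)) k))\<^sup>2)
        = (\<Sum>k<n. if k \<in> T then (Frac (vecmat r y A k))\<^sup>2 else 0)"
      by (intro sum.cong) (auto simp: vecmat_zero_cols)
    also have "\<dots> = (\<Sum>k\<in>{..<n} \<inter> T. (Frac (vecmat r y A k))\<^sup>2)"
      by (rule sum.inter_restrict[symmetric]) simp
    also have "{..<n} \<inter> T = T" using assms(2) by auto
    finally show ?thesis by (simp add: frac_energy_def)
  qed
  have "(Frac (vecmat r y (zero_cols A ({..<n} - T)) j))\<^sup>2 \<le> 1 / s * frac_energy r A T y"
    if "j < n" for y j
  proof (cases "j \<in> T")
    case True
    then show ?thesis using balanced[OF True] assms(1) by (simp add: vecmat_zero_cols field_simps)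
  next
    case False
    then show ?thesis using frac_energy_nonneg[of r A T y] assms(1) that
      by (simp add: vecmat_zero_cols)
  qed
  then show ?thesis unfolding frac_spread_def sum_eq by blast
qed

lemma exponent_bound_of_pow_le:
  assumes "1 \<le> s" "0 < M" "(1 + 1 / (1024 * s)) ^ m \<le> real M ^ r"
  shows "real m \<le> 2048 * real r * s * ln (real M)"
proof -
  define x where "x = 1 / (1024 * s)"
  have "0 < x" "x \<le> 1/2" using assms(1) by (auto simp: x_def field_simps)
  then have "x * x \<le> x * (1/2)" by (intro mult_left_mono) auto
  moreover have "x - x\<^sup>2 \<le> ln (1 + x)"
    using \<open>0 < x\<close> \<open>x \<le> 1/2\<close> by (intro ln_one_plus_pos_lower_bound) auto
  ultimately have "x / 2 \<le> ln (1 + x)" unfolding power2_eq_square by linarith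
  then have "real m * (x / 2) \<le> real m * ln (1 + x)" by (intro mult_left_mono) auto
  also have "\<dots> = ln ((1 + x) ^ m)" using \<open>0 < x\<close> by (simp add: ln_realpow)
  also have "\<dots> \<le> ln (real M ^ r)"
    using assms(3) \<open>0 < x\<close> unfolding x_def[symmetric] by (intro ln_mono zero_less_power) auto
  also have "\<dots> = real r * ln (real M)" using assms(2) by (simp add: ln_realpow)
  finally show ?thesis using assms(1) by (simp add: x_def field_simps)
qed

lemma card_Diff_remove:
  assumes "T \<subseteq> U" "finite U" "j \<in> T"
  shows "card (U - (T - {j})) = Suc (card (U - T))"
proof -
  have "U - (T - {j}) = insert j (U - T)" using assms(1,3) by auto
  then show ?thesis using assms(2,3) by simp
qed

text \<open>Among the column sets \<open>T\<close> whose potential has grown by the factor \<open>\<gamma>\<close> for every removed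
  column, take a minimal one: a column of \<open>T\<close> carrying too large a share of some \<open>Frac (y\<^sup>T A)\<close>
  could be removed as well.\<close>

lemma exists_frac_spread_zero_cols:
  assumes "1 \<le> s" "0 < M" and A_bound: "\<forall>i<r. \<forall>k<n. \<bar>real_of_int (A i k)\<bar> \<le> B"
    and "8 * real n * real r * B \<le> real M"
  shows "\<exists>S\<subseteq>{..<n}. real (card S) \<le> 2048 * real r * s * ln (real M)
    \<and> frac_spread r n s (zero_cols A S)"
proof -
  define \<gamma> where "\<gamma> = 1 + 1 / (1024 * s)"
  define F where "F = {T. T \<subseteq> {..<n} \<and> \<gamma> ^ card ({..<n} - T) \<le> potential r M s A T}"
  have "{..<n} \<in> F" using potential_ge_one[OF assms(2)] by (simp add: F_def)
  then have "F \<noteq> {}" by blast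
  moreover have "finite F" unfolding F_def by (rule finite_subset[of _ "Pow {..<n}"]) auto
  ultimately have "\<exists>T\<in>F. \<not> (\<exists>T'\<in>F. T' \<subset> T)" by (intro ex_min_if_finite)
  then obtain T where "T \<in> F" and minimal: "\<not> (\<exists>T'\<in>F. T' \<subset> T)" ..
  from \<open>T \<in> F\<close> have "T \<subseteq> {..<n}" and T_potential: "\<gamma> ^ card ({..<n} - T) \<le> potential r M s A T"
    by (simp_all add: F_def)
  have "0 \<le> \<gamma>" using assms(1) by (simp add: \<gamma>_def)
  have balanced: "s * (Frac (vecmat r y A j))\<^sup>2 \<le> frac_energy r A T y" if "j \<in> T" for y j
  proof (rule ccontr)
    assume "\<not> ?thesis"
    then have "frac_energy r A T y < s * (Frac (vecmat r y A j))\<^sup>2" by simp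
    from potential_remove_unbalanced_ge[OF assms \<open>T \<subseteq> {..<n}\<close> \<open>j \<in> T\<close> this]
    have grows: "\<gamma> * potential r M s A T \<le> potential r M s A (T - {j})"
      unfolding \<gamma>_def .
    have "\<gamma> ^ Suc (card ({..<n} - T)) \<le> \<gamma> * potential r M s A T"
      using mult_left_mono[OF T_potential \<open>0 \<le> \<gamma>\<close>] by simp
    with grows have "\<gamma> ^ card ({..<n} - (T - {j})) \<le> potential r M s A (T - {j})"
      unfolding card_Diff_remove[OF \<open>T \<subseteq> {..<n}\<close> _ \<open>j \<in> T\<close>, simplified] by linarith
    then have "T - {j} \<in> F"
      unfolding F_def using \<open>T \<subseteq> {..<n}\<close> by blast
    moreover have "T - {j} \<subset> T" using \<open>j \<in> T\<close> by blast
    ultimately show False using minimal by blast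
  qed
  have "\<gamma> ^ card ({..<n} - T) \<le> real M ^ r"
    using order_trans[OF T_potential potential_le_card] assms(1) by simp
  then have card_bound: "real (card ({..<n} - T)) \<le> 2048 * real r * s * ln (real M)"
    unfolding \<gamma>_def by (rule exponent_bound_of_pow_le[OF assms(1,2)])
  have "frac_spread r n s (zero_cols A ({..<n} - T))"
    using frac_spread_zero_cols_compl[OF _ \<open>T \<subseteq> {..<n}\<close> balanced] assms(1) by simp
  with card_bound show ?thesis by (intro exI[of _ "{..<n} - T"]) auto
qed

lemma exists_grid_size:
  fixes c :: real
  assumes "2 \<le> n" "r < n"
  shows "\<exists>M::nat. 0 < M \<and> 8 * real n * real r * real n powr c \<le> real M
    \<and> ln (real M) \<le> (6 + max c 0) * ln (real n)"
proof -
  define B where "B = real n powr c"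
  define P where "P = real n powr max c 0"
  define M where "M = nat \<lceil>8 * real n * real r * B\<rceil> + 1"
  have "0 < B" "B \<le> P" "1 \<le> P" using assms(1) by (auto simp: B_def P_def powr_mono ge_one_powr_ge_zero)
  have real_M: "real M = of_int \<lceil>8 * real n * real r * B\<rceil> + 1"
    using \<open>0 < B\<close> by (simp add: M_def)
  have "real n * real r * B \<le> real n ^ 2 * P"
    using assms \<open>0 < B\<close> \<open>B \<le> P\<close> by (simp add: power2_eq_square mult_mono)
  moreover have "1 \<le> real n ^ 2 * P"
    using assms(1) \<open>1 \<le> P\<close> mult_mono[of 1 "real n ^ 2" 1 P] by simp
  ultimately have "real M \<le> 10 * real n ^ 2 * P" using real_M by linarith
  moreover have "0 < real M" by (simp add: M_def)
  ultimately have "ln (real M) \<le> ln (10 * real n ^ 2 * P)" by (intro ln_mono)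
  also have "\<dots> = ln 10 + 2 * ln (real n) + max c 0 * ln (real n)"
    using assms(1) \<open>1 \<le> P\<close> by (simp add: P_def ln_mult ln_realpow)
  finally have "ln (real M) \<le> ln 10 + 2 * ln (real n) + max c 0 * ln (real n)" .
  moreover have "ln (10::real) \<le> 4 * ln (real n)"
  proof -
    have "(10::real) \<le> 2 ^ 4" by simp
    also have "\<dots> \<le> real n ^ 4" using assms(1) by (intro power_mono) auto
    finally have "ln 10 \<le> ln (real n ^ 4)" by (rule ln_mono) simp
    then show ?thesis using assms(1) by (simp add: ln_realpow)
  qed
  ultimately have "ln (real M) \<le> (6 + max c 0) * ln (real n)" by (simp add: algebra_simps)
  moreover have "8 * real n * real r * B \<le> real M" using real_M by linarith
  ultimately show ?thesis using \<open>0 < real M\<close> unfolding B_def by (intro exI[of _ M]) auto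
qed

lemma exists_frac_spread_zero_cols_ln:
  fixes c :: real
  assumes "2 \<le> n" "r < n" "1 \<le> s"
    and "\<forall>i<r. \<forall>k<n. \<bar>real_of_int (A i k)\<bar> \<le> real n powr c"
  shows "\<exists>S\<subseteq>{..<n}. real (card S) \<le> 2048 * (6 + max c 0) * real r * s * ln (real n)
    \<and> frac_spread r n s (zero_cols A S)"
proof -
  obtain M where "0 < M" "8 * real n * real r * real n powr c \<le> real M"
    and ln_M: "ln (real M) \<le> (6 + max c 0) * ln (real n)"
    using exists_grid_size[OF assms(1,2)] by blast
  then obtain S where "S \<subseteq> {..<n}" "frac_spread r n s (zero_cols A S)"
    and "real (card S) \<le> 2048 * real r * s * ln (real M)"
    using exists_frac_spread_zero_cols[OF assms(3) _ assms(4)] by blast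
  moreover have "2048 * real r * s * ln (real M) \<le> 2048 * (6 + max c 0) * real r * s * ln (real n)"
    using mult_left_mono[OF ln_M, of "2048 * real r * s"] assms(3) by (simp add: mult_ac)
  ultimately show ?thesis by (meson order_trans)
qed

lemma le_mult_ln_if_le:
  assumes "2 \<le> n" "n \<le> r" "1 \<le> s" "2 \<le> C"
  shows "real n \<le> C * real r * s * ln (real n)"
proof -
  have "1/2 \<le> ln (2::real)" by (subst ln_ge_iff) (use exp_half_le2 in auto)
  also have "\<dots> \<le> ln (real n)" using assms(1) by simp
  finally have "1 \<le> C * ln (real n)"
    using assms(4) mult_mono[of 2 C "1/2" "ln (real n)"] by simp
  then have "1 \<le> C * ln (real n) * s"
    using assms(3) mult_mono[of 1 "C * ln (real n)" 1 s] by simp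
  have "real n \<le> real r * 1" using assms(2) by simp
  also have "\<dots> \<le> real r * (C * ln (real n) * s)"
    using \<open>1 \<le> C * ln (real n) * s\<close> by (intro mult_left_mono) auto
  finally show ?thesis by (simp add: mult_ac)
qed

theorem mainTheorem5:
  fixes c :: real
  shows "\<exists>C::real. \<forall>(n::nat) (r::nat) (s::real) (A::nat \<Rightarrow> nat \<Rightarrow> int).
           n \<ge> 2 \<longrightarrow> s \<ge> 1 \<longrightarrow>
           (\<forall>i<r. \<forall>j<n. \<bar>real_of_int (A i j)\<bar> \<le> real n powr c) \<longrightarrow>
           (\<exists>S \<subseteq> {..<n}. real (card S) \<le> C * real r * s * ln (real n) \<and>
              (\<forall>y::nat \<Rightarrow> real. \<forall>j<n.
                 (Frac (vecmat r y (zero_cols A S) j))\<^sup>2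
                   \<le> (1 / s) * (\<Sum>k<n. (Frac (vecmat r y (zero_cols A S) k))\<^sup>2)))"
proof -
  define C where "C = 2048 * (6 + max c 0)"
  have "\<exists>S\<subseteq>{..<n}. real (card S) \<le> C * real r * s * ln (real n)
      \<and> frac_spread r n s (zero_cols A S)"
    if "2 \<le> n" "1 \<le> s" "\<forall>i<r. \<forall>j<n. \<bar>real_of_int (A i j)\<bar> \<le> real n powr c"
    for n r s A
  proof (cases "r < n")
    case True
    then show ?thesis
      using exists_frac_spread_zero_cols_ln[OF that(1) True that(2,3)] by (simp add: C_def)
  next
    case False
    then have "real (card {..<n}) \<le> C * real r * s * ln (real n)"
      using le_mult_ln_if_le[OF that(1) _ that(2), of r C] by (simp add: C_def)
    moreover have "frac_spread r n s (zero_cols A {..<n})"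
      using frac_spread_zero_cols_compl[of s "{}"] that(2) by simp
    ultimately show ?thesis by (intro exI[of _ "{..<n}"]) auto
  qed
  then show ?thesis unfolding frac_spread_def by blast
qed

end
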